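(* Let $P$ be a poset with $n$ elements. Then $$K_P(\mathbf x)=\sum_{\alpha\vDash n}\frac{\Psi_\alpha(\mathbf x)}{z_\alpha}\,|\mathcal O^*_\alpha(P)|.$$
   Context: $K_P(\mathbf x)=\sum_f\prod_{x\in P}x_{f(x)}$ over all $f:P\to\mathbb Z_{>0}$ with $x<_Py\Rightarrow f(x)\le f(y)$. For a composition $\alpha=(\alpha_1,\dots,\alpha_\ell)$ of $n$, $\mathcal O^*_\alpha(P)$ is the set of surjections $f:P\to[\ell]$ with $x\le_Py\Rightarrow f(x)\le f(y)$, $|f^{-1}(i)|=\alpha_i$ for all $i$, and each fiber $f^{-1}(i)$ (induced subposet) having a unique minimal element. $S_\alpha=\{\alpha_1,\dots,\alpha_1+\dots+\alpha_{\ell-1}\}$; blocks $B_i(\alpha)$ are the consecutive intervals of $[n]$ of sizes $\alpha_1,\alpha_2,\dots$; $\alpha\le\beta$ iff $S_\beta\subseteq S_\alpha$. $M_\alpha=\sum_{i_1<\dots<i_\ell}x_{i_1}^{\alpha_1}\cdots x_{i_\ell}^{\alpha_\ell}$; $z_\alpha=\prod_i i^{m_i}m_i!$ with $m_i$ the number of parts equal to $i$; $\pi(\gamma)=\prod_i(\gamma_1+\dots+\gamma_i)$; for $\alpha\le\beta$, $\pi(\alpha,\beta)=\prod_{i=1}^{\ell(\beta)}\pi(\alpha^{(i)})$ with $\alpha^{(i)}$ the parts $\alpha_j$ with $B_j(\alpha)\subseteq B_i(\beta)$; $\Psi_\alpha=z_\alpha\sum_{\beta\ge\alpha}\pi(\alpha,\beta)^{-1}M_\beta$.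 *)

theory Defs
  imports Complex_Main "HOL-Library.FuncSet" "HOL-Library.Multiset"
begin

definition poset_on :: "'a set \<Rightarrow> ('a \<Rightarrow> 'a \<Rightarrow> bool) \<Rightarrow> bool" where
  "poset_on P le \<longleftrightarrow>
     (\<forall>x\<in>P. le x x) \<and>
     (\<forall>x\<in>P. \<forall>y\<in>P. le x y \<and> le y x \<longrightarrow> x = y) \<and>
     (\<forall>x\<in>P. \<forall>y\<in>P. \<forall>z\<in>P. le x y \<and> le y z \<longrightarrow> le x z)"

definition compositions :: "nat \<Rightarrow> nat list set" where
  "compositions n = {\<alpha>. sum_list \<alpha> = n \<and> (\<forall>a\<in>set \<alpha>. 0 < a)}"

text \<open>K_P specialised to the variables x_1,...,x_N (all other variables set to 0).\<close>
definition KP :: "'a set \<Rightarrow> ('a \<Rightarrow> 'a \<Rightarrow> bool) \<Rightarrow> nat \<Rightarrow> (nat \<Rightarrow> real) \<Rightarrow> real" where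
  "KP P le N x = (\<Sum>f\<in>{f\<in>P \<rightarrow>\<^sub>E {1..N}. \<forall>p\<in>P. \<forall>q\<in>P. le p q \<and> p \<noteq> q \<longrightarrow> f p \<le> f q}.
                     \<Prod>p\<in>P. x (f p))"

definition Mqs :: "nat list \<Rightarrow> nat \<Rightarrow> (nat \<Rightarrow> real) \<Rightarrow> real" where
  "Mqs \<beta> N x = (\<Sum>i\<in>{i\<in>{0..<length \<beta>} \<rightarrow>\<^sub>E {1..N}. strict_mono_on {0..<length \<beta>} i}.
                    \<Prod>j<length \<beta>. x (i j) ^ (\<beta> ! j))"

definition Sset :: "nat list \<Rightarrow> nat set" where
  "Sset \<alpha> = {sum_list (take i \<alpha>) | i. 1 \<le> i \<and> i < length \<alpha>}"

definition refines :: "nat list \<Rightarrow> nat list \<Rightarrow> bool" where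
  "refines \<alpha> \<beta> \<longleftrightarrow> Sset \<beta> \<subseteq> Sset \<alpha>"

text \<open>Block B_i(alpha), 0-indexed i: the i-th consecutive interval of [n].\<close>
definition block :: "nat list \<Rightarrow> nat \<Rightarrow> nat set" where
  "block \<alpha> i = {sum_list (take i \<alpha>) + 1 .. sum_list (take (Suc i) \<alpha>)}"

definition zee :: "nat list \<Rightarrow> nat" where
  "zee \<alpha> = (\<Prod>i\<in>set \<alpha>. i ^ count (mset \<alpha>) i * fact (count (mset \<alpha>) i))"

definition piC :: "nat list \<Rightarrow> nat" where
  "piC \<gamma> = (\<Prod>i<length \<gamma>. sum_list (take (Suc i) \<gamma>))"

definition subcomp :: "nat list \<Rightarrow> nat list \<Rightarrow> nat \<Rightarrow> nat list" where
  "subcomp \<alpha> \<beta> i = [\<alpha> ! j. j \<leftarrow> [0..<length \<alpha>], block \<alpha> j \<subseteq> block \<beta> i]"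

definition piAB :: "nat list \<Rightarrow> nat list \<Rightarrow> nat" where
  "piAB \<alpha> \<beta> = (\<Prod>i<length \<beta>. piC (subcomp \<alpha> \<beta> i))"

definition Psi :: "nat list \<Rightarrow> nat \<Rightarrow> (nat \<Rightarrow> real) \<Rightarrow> real" where
  "Psi \<alpha> N x = real (zee \<alpha>) *
     (\<Sum>\<beta>\<in>{\<beta>\<in>compositions (sum_list \<alpha>). refines \<alpha> \<beta>}. Mqs \<beta> N x / real (piAB \<alpha> \<beta>))"

definition unique_min :: "('a \<Rightarrow> 'a \<Rightarrow> bool) \<Rightarrow> 'a set \<Rightarrow> bool" where
  "unique_min le F \<longleftrightarrow> (\<exists>!m. m \<in> F \<and> (\<forall>y\<in>F. le y m \<longrightarrow> y = m))"

definition Ostar :: "'a set \<Rightarrow> ('a \<Rightarrow> 'a \<Rightarrow> bool) \<Rightarrow> nat list \<Rightarrow> ('a \<Rightarrow> nat) set" where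
  "Ostar P le \<alpha> = {f\<in>P \<rightarrow>\<^sub>E {1..length \<alpha>}.
      f ` P = {1..length \<alpha>} \<and>
      (\<forall>p\<in>P. \<forall>q\<in>P. le p q \<longrightarrow> f p \<le> f q) \<and>
      (\<forall>i\<in>{1..length \<alpha>}. card {p\<in>P. f p = i} = \<alpha> ! (i - 1)) \<and>
      (\<forall>i\<in>{1..length \<alpha>}. unique_min le {p\<in>P. f p = i})}"

end

theory Submission
  imports Defs
begin

(* Write O_beta(P) for the order-preserving surjections P -> [l] with fibre sizes beta; O*_beta(P)
   consists of those whose fibres have unique minima. Sorting the values of a P-partition factors it
   uniquely as a strictly increasing sequence after a map in O_beta(P), so K_P is the sum of
   |O_beta(P)| M_beta. Expanding Psi_alpha in the M-basis, the theorem becomes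
     |O_beta(P)| = sum over alpha <= beta of |O*_alpha(P)| / pi(alpha, beta).
   Cutting off the last block of beta splits a surjection into one on an upset W and one on its
   complement, which makes both sides multiplicative, so induction on beta reduces the identity to
   the one-block case  sum_gamma |O*_gamma(W)| / pi(gamma) = [|W| = m].  That case is an induction
   on m: the last fibre of a map in O*_gamma(W) is an upset with a unique minimum, i.e. a principal
   upset, and the |W| principal upsets of W cancel the last factor m of pi(gamma). *)

section \<open>Surjections of a given type\<close>

definition ordered_surj ::
    "'a set \<Rightarrow> ('a \<Rightarrow> 'a \<Rightarrow> bool) \<Rightarrow> ('a set \<Rightarrow> bool) \<Rightarrow> nat list \<Rightarrow> ('a \<Rightarrow> nat) set" where
  "ordered_surj Q le R \<alpha> = {f\<in>Q \<rightarrow>\<^sub>E {1..length \<alpha>}. f ` Q = {1..length \<alpha>} \<and>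
      (\<forall>p\<in>Q. \<forall>q\<in>Q. le p q \<longrightarrow> f p \<le> f q) \<and>
      (\<forall>i\<in>{1..length \<alpha>}. card {p\<in>Q. f p = i} = \<alpha> ! (i - 1)) \<and>
      (\<forall>i\<in>{1..length \<alpha>}. R {p\<in>Q. f p = i})}"

abbreviation Oset :: "'a set \<Rightarrow> ('a \<Rightarrow> 'a \<Rightarrow> bool) \<Rightarrow> nat list \<Rightarrow> ('a \<Rightarrow> nat) set" where
  "Oset Q le \<alpha> \<equiv> ordered_surj Q le (\<lambda>_. True) \<alpha>"

lemma Ostar_eq_ordered_surj: "Ostar P le \<alpha> = ordered_surj P le (unique_min le) \<alpha>"
  unfolding Ostar_def ordered_surj_def ..

lemma finite_ordered_surj: "finite Q \<Longrightarrow> finite (ordered_surj Q le R \<alpha>)"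
  unfolding ordered_surj_def by (rule finite_subset[of _ "Q \<rightarrow>\<^sub>E {1..length \<alpha>}"]) (auto intro: finite_PiE)

lemma ordered_surjD:
  assumes "f \<in> ordered_surj Q le R \<alpha>"
  shows "\<And>p. p \<in> Q \<Longrightarrow> f p \<in> {1..length \<alpha>}" and "f \<in> extensional Q"
    and "f ` Q = {1..length \<alpha>}"
    and "\<And>p q. p \<in> Q \<Longrightarrow> q \<in> Q \<Longrightarrow> le p q \<Longrightarrow> f p \<le> f q"
    and "\<And>i. i \<in> {1..length \<alpha>} \<Longrightarrow> card {p\<in>Q. f p = i} = \<alpha> ! (i - 1)"
    and "\<And>i. i \<in> {1..length \<alpha>} \<Longrightarrow> R {p\<in>Q. f p = i}"
  using assms by (auto simp: ordered_surj_def PiE_iff)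

definition upsets :: "'a set \<Rightarrow> ('a \<Rightarrow> 'a \<Rightarrow> bool) \<Rightarrow> 'a set set" where
  "upsets Q le = {W. W \<subseteq> Q \<and> (\<forall>p\<in>W. \<forall>q\<in>Q. le p q \<longrightarrow> q \<in> W)}"

lemma finite_upsets: "finite Q \<Longrightarrow> finite (upsets Q le)"
  unfolding upsets_def by (rule finite_subset[of _ "Pow Q"]) auto

lemma upsets_subset: "W \<in> upsets Q le \<Longrightarrow> W \<subseteq> Q"
  by (simp add: upsets_def)

(* A surjection of type alpha @ gamma is one of type alpha on the complement of the upset W of
   elements sent above length alpha, glued to a shifted one of type gamma on W. *)
definition glue :: "'a set \<Rightarrow> nat \<Rightarrow> 'a set \<times> ('a \<Rightarrow> nat) \<times> ('a \<Rightarrow> nat) \<Rightarrow> 'a \<Rightarrow> nat" where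
  "glue Q k = (\<lambda>(W, g, h). restrict (\<lambda>p. if p \<in> W then h p + k else g p) Q)"

definition unglue :: "'a set \<Rightarrow> nat \<Rightarrow> ('a \<Rightarrow> nat) \<Rightarrow> 'a set \<times> ('a \<Rightarrow> nat) \<times> ('a \<Rightarrow> nat)" where
  "unglue Q k f = (let W = {p\<in>Q. k < f p} in (W, restrict f (Q - W), restrict (\<lambda>p. f p - k) W))"

lemma glue_fibre_low:
  assumes "\<forall>p\<in>W. 1 \<le> h p" and "i \<le> k"
  shows "{p\<in>Q. glue Q k (W, g, h) p = i} = {p\<in>Q - W. g p = i}"
  using assms by (force simp: glue_def)

lemma glue_fibre_high:
  assumes "W \<subseteq> Q" and "\<forall>p\<in>Q - W. g p \<le> k" and "k < i"
  shows "{p\<in>Q. glue Q k (W, g, h) p = i} = {p\<in>W. h p = i - k}"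
  using assms by (force simp: glue_def)

lemma image_glue:
  assumes "W \<subseteq> Q"
  shows "glue Q k (W, g, h) ` Q = g ` (Q - W) \<union> (\<lambda>j. j + k) ` h ` W"
  using assms by (force simp: glue_def)

lemma glue_in_ordered_surj:
  assumes W: "W \<in> upsets Q le" and g: "g \<in> ordered_surj (Q - W) le R \<alpha>"
    and h: "h \<in> ordered_surj W le R \<gamma>"
  shows "glue Q (length \<alpha>) (W, g, h) \<in> ordered_surj Q le R (\<alpha> @ \<gamma>)"
proof -
  let ?k = "length \<alpha>" and ?f = "glue Q (length \<alpha>) (W, g, h)"
  have WQ: "W \<subseteq> Q" using W by (rule upsets_subset)
  note gD = ordered_surjD[OF g] and hD = ordered_surjD[OF h]
  have h1: "\<forall>p\<in>W. 1 \<le> h p" and gk: "\<forall>p\<in>Q - W. g p \<le> ?k" using gD(1) hD(1) by auto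
  have img: "?f ` Q = {1..length (\<alpha> @ \<gamma>)}"
  proof -
    have "(\<lambda>j. j + ?k) ` {1..length \<gamma>} = {?k + 1..?k + length \<gamma>}"
      by (simp add: image_add_atLeastAtMost add.commute)
    then show ?thesis
      unfolding image_glue[OF WQ] gD(3) hD(3) by auto
  qed
  have "\<forall>p\<in>Q. \<forall>q\<in>Q. le p q \<longrightarrow> ?f p \<le> ?f q"
  proof (intro ballI impI)
    fix p q assume p: "p \<in> Q" and q: "q \<in> Q" and pq: "le p q"
    have "p \<in> W \<Longrightarrow> q \<in> W" using W q pq by (auto simp: upsets_def)
    moreover have "g p \<le> h q + ?k" if "p \<notin> W" using gk p that by (auto intro: trans_le_add2)
    ultimately show "?f p \<le> ?f q"
      using p q pq gD(4)[of p q] hD(4)[of p q] by (auto simp: glue_def)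
  qed
  moreover have "card {p\<in>Q. ?f p = i} = (\<alpha> @ \<gamma>) ! (i - 1) \<and> R {p\<in>Q. ?f p = i}"
    if i: "i \<in> {1..length (\<alpha> @ \<gamma>)}" for i
  proof (cases "i \<le> ?k")
    case True
    then show ?thesis
      using glue_fibre_low[OF h1 True] gD(5,6)[of i] i by (auto simp: nth_append)
  next
    case False
    then have "i - ?k \<in> {1..length \<gamma>}" using i by auto
    then show ?thesis
      using glue_fibre_high[OF WQ gk, of i] hD(5,6)[of "i - ?k"] False
      by (auto simp: nth_append diff_diff_add add.commute)
  qed
  moreover have "?f \<in> Q \<rightarrow>\<^sub>E {1..length (\<alpha> @ \<gamma>)}"
  proof -
    have "?f \<in> extensional Q" by (simp add: glue_def)
    then show ?thesis unfolding PiE_iff img[symmetric] by blast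
  qed
  ultimately show ?thesis
    using img by (simp add: ordered_surj_def)
qed

lemma unglue_glue:
  assumes W: "W \<in> upsets Q le" and g: "g \<in> ordered_surj (Q - W) le R \<alpha>"
    and h: "h \<in> ordered_surj W le R \<gamma>"
  shows "unglue Q (length \<alpha>) (glue Q (length \<alpha>) (W, g, h)) = (W, g, h)"
proof -
  let ?k = "length \<alpha>" and ?f = "glue Q (length \<alpha>) (W, g, h)"
  note gD = ordered_surjD[OF g] and hD = ordered_surjD[OF h]
  have WQ: "W \<subseteq> Q" using W by (rule upsets_subset)
  have "{p\<in>Q. ?k < ?f p} = W"
  proof (intro equalityI subsetI)
    fix p assume "p \<in> {p\<in>Q. ?k < ?f p}"
    then show "p \<in> W" using gD(1)[of p] by (auto simp: glue_def split: if_splits)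
  next
    fix p assume "p \<in> W"
    then show "p \<in> {p\<in>Q. ?k < ?f p}" using WQ hD(1)[of p] by (auto simp: glue_def)
  qed
  moreover have "restrict ?f (Q - W) = g" and "restrict (\<lambda>p. ?f p - ?k) W = h"
    using WQ gD(2) hD(2) by (auto simp: glue_def fun_eq_iff extensional_def)
  ultimately show ?thesis
    by (simp add: unglue_def)
qed

lemma glue_unglue:
  assumes "f \<in> ordered_surj Q le R \<alpha>"
  shows "glue Q k (unglue Q k f) = f"
  using ordered_surjD(2)[OF assms] by (auto simp: glue_def unglue_def Let_def fun_eq_iff extensional_def)

lemma unglue_lower_in_ordered_surj:
  assumes f: "f \<in> ordered_surj Q le R (\<alpha> @ \<gamma>)"
  shows "restrict f {p\<in>Q. f p \<le> length \<alpha>} \<in> ordered_surj {p\<in>Q. f p \<le> length \<alpha>} le R \<alpha>"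
proof -
  let ?L = "{p\<in>Q. f p \<le> length \<alpha>}"
  note fD = ordered_surjD[OF f]
  have fibre: "{p\<in>?L. restrict f ?L p = i} = {p\<in>Q. f p = i}" if "i \<in> {1..length \<alpha>}" for i
    using that by auto
  have "restrict f ?L ` ?L = {v \<in> f ` Q. v \<le> length \<alpha>}"
    by auto
  also have "\<dots> = {1..length \<alpha>}"
    unfolding fD(3) by auto
  finally have img: "restrict f ?L ` ?L = {1..length \<alpha>}" .
  moreover have "card {p\<in>?L. restrict f ?L p = i} = \<alpha> ! (i - 1) \<and> R {p\<in>?L. restrict f ?L p = i}"
    if i: "i \<in> {1..length \<alpha>}" for i
    using fD(5,6)[of i] i unfolding fibre[OF i] by (auto simp: nth_append)
  moreover have "restrict f ?L \<in> ?L \<rightarrow>\<^sub>E {1..length \<alpha>}"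
    unfolding PiE_iff img[symmetric] by auto
  ultimately show ?thesis
    using img fD(4) by (simp add: ordered_surj_def)
qed

lemma unglue_upper_in_ordered_surj:
  assumes f: "f \<in> ordered_surj Q le R (\<alpha> @ \<gamma>)"
  shows "restrict (\<lambda>p. f p - length \<alpha>) {p\<in>Q. length \<alpha> < f p}
           \<in> ordered_surj {p\<in>Q. length \<alpha> < f p} le R \<gamma>"
proof -
  let ?k = "length \<alpha>"
  let ?U = "{p\<in>Q. ?k < f p}" and ?h = "restrict (\<lambda>p. f p - length \<alpha>) {p\<in>Q. length \<alpha> < f p}"
  note fD = ordered_surjD[OF f]
  have fibre: "{p\<in>?U. ?h p = i} = {p\<in>Q. f p = i + ?k}" if "i \<in> {1..length \<gamma>}" for i
    using that by auto
  have img: "?h ` ?U = {1..length \<gamma>}"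
  proof (intro equalityI subsetI)
    fix i assume "i \<in> ?h ` ?U"
    then show "i \<in> {1..length \<gamma>}" by (auto dest!: fD(1))
  next
    fix i assume i: "i \<in> {1..length \<gamma>}"
    then have "i + ?k \<in> f ` Q" using fD(3) by auto
    then obtain p where "p \<in> Q" "f p = i + ?k" by auto
    with i show "i \<in> ?h ` ?U" by (auto intro!: image_eqI[of _ _ p])
  qed
  moreover have "card {p\<in>?U. ?h p = i} = \<gamma> ! (i - 1) \<and> R {p\<in>?U. ?h p = i}"
    if i: "i \<in> {1..length \<gamma>}" for i
  proof -
    have "(\<alpha> @ \<gamma>) ! (i + ?k - 1) = \<gamma> ! (i - 1)" using i by (auto simp: nth_append)
    then show ?thesis using fD(5,6)[of "i + ?k"] i unfolding fibre[OF i] by auto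
  qed
  moreover have "?h \<in> ?U \<rightarrow>\<^sub>E {1..length \<gamma>}"
    unfolding PiE_iff img[symmetric] by auto
  ultimately show ?thesis
    using img fD(4) by (auto simp: ordered_surj_def diff_le_mono)
qed

lemma unglue_in_ordered_surj:
  assumes f: "f \<in> ordered_surj Q le R (\<alpha> @ \<gamma>)"
  shows "unglue Q (length \<alpha>) f
           \<in> (SIGMA W:upsets Q le. ordered_surj (Q - W) le R \<alpha> \<times> ordered_surj W le R \<gamma>)"
proof -
  let ?W = "{p\<in>Q. length \<alpha> < f p}"
  have lower: "Q - ?W = {p\<in>Q. f p \<le> length \<alpha>}" by auto
  have "?W \<in> upsets Q le"
    using ordered_surjD(4)[OF f] by (auto simp: upsets_def intro: less_le_trans)
  then show ?thesis
    using unglue_lower_in_ordered_surj[OF f] unglue_upper_in_ordered_surj[OF f]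
    unfolding unglue_def Let_def lower[symmetric] by simp
qed

lemma card_ordered_surj_append:
  assumes "finite Q"
  shows "card (ordered_surj Q le R (\<alpha> @ \<gamma>))
           = (\<Sum>W\<in>upsets Q le. card (ordered_surj (Q - W) le R \<alpha>) * card (ordered_surj W le R \<gamma>))"
proof -
  let ?S = "SIGMA W:upsets Q le. ordered_surj (Q - W) le R \<alpha> \<times> ordered_surj W le R \<gamma>"
  have "bij_betw (glue Q (length \<alpha>)) ?S (ordered_surj Q le R (\<alpha> @ \<gamma>))"
  proof (rule bij_betw_byWitness[where f'="unglue Q (length \<alpha>)"])
    show "\<forall>a\<in>?S. unglue Q (length \<alpha>) (glue Q (length \<alpha>) a) = a"
      using unglue_glue by auto
    show "glue Q (length \<alpha>) ` ?S \<subseteq> ordered_surj Q le R (\<alpha> @ \<gamma>)"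
      using glue_in_ordered_surj by auto
    show "\<forall>f\<in>ordered_surj Q le R (\<alpha> @ \<gamma>). glue Q (length \<alpha>) (unglue Q (length \<alpha>) f) = f"
      using glue_unglue by blast
    show "unglue Q (length \<alpha>) ` ordered_surj Q le R (\<alpha> @ \<gamma>) \<subseteq> ?S"
      using unglue_in_ordered_surj by blast
  qed
  then have "card (ordered_surj Q le R (\<alpha> @ \<gamma>)) = card ?S"
    by (rule bij_betw_same_card[symmetric])
  also have "\<dots> = (\<Sum>W\<in>upsets Q le. card (ordered_surj (Q - W) le R \<alpha> \<times> ordered_surj W le R \<gamma>))"
  proof (rule card_SigmaI)
    show "finite (upsets Q le)" using assms by (rule finite_upsets)
    show "\<forall>W\<in>upsets Q le. finite (ordered_surj (Q - W) le R \<alpha> \<times> ordered_surj W le R \<gamma>)"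
    proof
      fix W assume "W \<in> upsets Q le"
      then have "finite W" using assms by (metis upsets_subset finite_subset)
      then show "finite (ordered_surj (Q - W) le R \<alpha> \<times> ordered_surj W le R \<gamma>)"
        using assms by (simp add: finite_ordered_surj)
    qed
  qed
  finally show ?thesis
    by (simp add: card_cartesian_product)
qed

lemma length_le_sum_list: "\<forall>a\<in>set xs. 0 < (a::nat) \<Longrightarrow> length xs \<le> sum_list xs"
  by (induction xs) auto

lemma finite_compositions: "finite (compositions m)"
proof (rule finite_subset)
  show "compositions m \<subseteq> {xs. set xs \<subseteq> {0..m} \<and> length xs \<le> m}"
    using length_le_sum_list member_le_sum_list by (fastforce simp: compositions_def)
  show "finite {xs. set xs \<subseteq> {0..m} \<and> length xs \<le> m}"
    by (rule finite_lists_length_le) simp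
qed

lemma compositions_0: "compositions 0 = {[]}"
  by (auto simp: compositions_def sum_list_eq_0_iff) (metis last_in_set less_irrefl)

lemma sum_compositions_snoc:
  assumes "0 < m"
  shows "(\<Sum>\<gamma>\<in>compositions m. F \<gamma>) = (\<Sum>c\<in>{1..m}. \<Sum>\<gamma>\<in>compositions (m - c). F (\<gamma> @ [c]))"
proof -
  have "(\<Sum>c\<in>{1..m}. \<Sum>\<gamma>\<in>compositions (m - c). F (\<gamma> @ [c]))
      = (\<Sum>(c, \<gamma>)\<in>(SIGMA c:{1..m}. compositions (m - c)). F (\<gamma> @ [c]))"
    by (rule sum.Sigma) (auto simp: finite_compositions)
  also have "\<dots> = (\<Sum>\<gamma>\<in>compositions m. F \<gamma>)"
  proof (rule sum.reindex_bij_witness[where j="\<lambda>(c, \<gamma>). \<gamma> @ [c]" and i="\<lambda>\<gamma>. (last \<gamma>, butlast \<gamma>)"])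
    fix \<gamma> assume \<gamma>: "\<gamma> \<in> compositions m"
    then have "\<gamma> \<noteq> []" using assms by (auto simp: compositions_def)
    then have split: "\<gamma> = butlast \<gamma> @ [last \<gamma>]" by simp
    then show "(\<lambda>(c, \<gamma>). \<gamma> @ [c]) (last \<gamma>, butlast \<gamma>) = \<gamma>" by simp
    have "sum_list (butlast \<gamma>) + last \<gamma> = m" "0 < last \<gamma>" "\<forall>a\<in>set (butlast \<gamma>). 0 < a"
      using \<gamma> by (subst (asm) split, simp add: compositions_def)+
    then show "(last \<gamma>, butlast \<gamma>) \<in> (SIGMA c:{1..m}. compositions (m - c))"
      by (auto simp: compositions_def)
  qed (auto simp: compositions_def)
  finally show ?thesis by simp
qed

lemma piC_snoc: "piC (\<gamma> @ [c]) = piC \<gamma> * (sum_list \<gamma> + c)"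
proof -
  have "(\<Prod>i<length \<gamma>. sum_list (take (Suc i) (\<gamma> @ [c]))) = (\<Prod>i<length \<gamma>. sum_list (take (Suc i) \<gamma>))"
    by (intro prod.cong) auto
  then show ?thesis unfolding piC_def by (simp add: lessThan_Suc mult.commute)
qed

lemma card_eq_sum_list_if_ordered_surj:
  assumes "finite Q" and "f \<in> ordered_surj Q le R \<gamma>"
  shows "card Q = sum_list \<gamma>"
proof -
  have "f ` Q \<subseteq> {1..length \<gamma>}" using assms(2) by (auto simp: ordered_surj_def)
  then have "card Q = (\<Sum>i\<in>{1..length \<gamma>}. card {p\<in>Q. f p = i})"
    using sum.group[OF assms(1), of _ f "\<lambda>_. 1::nat"] by simp
  also have "\<dots> = (\<Sum>i\<in>{1..length \<gamma>}. \<gamma> ! (i - 1))"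
    using ordered_surjD(5)[OF assms(2)] by simp
  also have "\<dots> = (\<Sum>i<length \<gamma>. \<gamma> ! i)"
    by (rule sum.reindex_bij_witness[where i=Suc and j="\<lambda>i. i - 1"]) auto
  finally show ?thesis by (simp add: sum_list_sum_nth atLeast0LessThan)
qed

lemma card_ordered_surj_Nil: "card (ordered_surj Q le R []) = (if Q = {} then 1 else 0)"
proof -
  have "ordered_surj Q le R [] = (if Q = {} then {\<lambda>_. undefined} else {})"
    by (auto simp: ordered_surj_def PiE_iff extensional_def fun_eq_iff)
  then show ?thesis by simp
qed

lemma card_ordered_surj_single:
  assumes "0 < c" and "finite W"
  shows "card (ordered_surj W le R [c]) = (if card W = c \<and> R W then 1 else 0)"
proof -
  have "ordered_surj W le R [c] = (if card W = c \<and> R W then {restrict (\<lambda>_. 1) W} else {})"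
  proof -
    have "f \<in> ordered_surj W le R [c] \<longleftrightarrow> card W = c \<and> R W \<and> f = restrict (\<lambda>_. 1) W" for f
    proof
      assume f: "f \<in> ordered_surj W le R [c]"
      then have "\<forall>p\<in>W. f p = 1" by (auto dest: ordered_surjD(1))
      then have "{p\<in>W. f p = 1} = W" and "f = restrict (\<lambda>_. 1) W"
        using ordered_surjD(2)[OF f] by (auto simp: fun_eq_iff extensional_def)
      then show "card W = c \<and> R W \<and> f = restrict (\<lambda>_. 1) W"
        using ordered_surjD(5,6)[OF f, of 1] by simp
    next
      assume "card W = c \<and> R W \<and> f = restrict (\<lambda>_. 1) W"
      moreover then have "W \<noteq> {}" using assms by auto
      ultimately show "f \<in> ordered_surj W le R [c]"
        by (auto simp: ordered_surj_def)
    qed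
    then show ?thesis by auto
  qed
  then show ?thesis by simp
qed

section \<open>The one-block identity\<close>

lemma poset_on_subset: "poset_on W le \<Longrightarrow> V \<subseteq> W \<Longrightarrow> poset_on V le"
  unfolding poset_on_def by blast

lemma ex_minimal_below:
  assumes "finite U" and "poset_on U le" and "y \<in> U"
  shows "\<exists>z\<in>U. le z y \<and> (\<forall>w\<in>U. le w z \<longrightarrow> w = z)"
proof -
  have refl: "\<And>x. x \<in> U \<Longrightarrow> le x x"
    and antisym: "\<And>x y. x \<in> U \<Longrightarrow> y \<in> U \<Longrightarrow> le x y \<Longrightarrow> le y x \<Longrightarrow> x = y"
    and trans: "\<And>x y z. x \<in> U \<Longrightarrow> y \<in> U \<Longrightarrow> z \<in> U \<Longrightarrow> le x y \<Longrightarrow> le y z \<Longrightarrow> le x z"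
    using assms(2) unfolding poset_on_def by blast+
  define down where "down z = {v\<in>U. le v z}" for z
  have "\<exists>z. (z \<in> U \<and> le z y) \<and> (\<forall>z'. z' \<in> U \<and> le z' y \<longrightarrow> card (down z) \<le> card (down z'))"
    by (rule ex_has_least_nat[of _ y]) (simp add: assms(3) refl)
  then obtain z where z: "z \<in> U" "le z y"
    and least: "\<And>z'. z' \<in> U \<Longrightarrow> le z' y \<Longrightarrow> card (down z) \<le> card (down z')"
    by blast
  have "w = z" if w: "w \<in> U" "le w z" for w
  proof -
    have sub: "down w \<subseteq> down z"
      using trans[of _ w z] w z by (auto simp: down_def)
    moreover have "card (down z) \<le> card (down w)"
      using least[OF w(1)] trans[OF w(1) z(1) assms(3) w(2) z(2)] by blast
    moreover have "finite (down z)" using assms(1) by (simp add: down_def)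
    ultimately have "down w = down z"
      by (metis card_mono card_subset_eq le_antisym)
    moreover have "z \<in> down z" using refl z by (simp add: down_def)
    ultimately have "z \<in> down w" by simp
    then have "le z w" by (simp add: down_def)
    then show "w = z" using antisym w z by blast
  qed
  then show ?thesis using z by blast
qed

lemma unique_min_upset_iff_principal:
  assumes "finite W" and "poset_on W le" and U: "U \<in> upsets W le"
  shows "unique_min le U \<longleftrightarrow> (\<exists>u\<in>W. U = {q\<in>W. le u q})"
proof -
  have refl: "\<And>x. x \<in> W \<Longrightarrow> le x x"
    and antisym: "\<And>x y. x \<in> W \<Longrightarrow> y \<in> W \<Longrightarrow> le x y \<Longrightarrow> le y x \<Longrightarrow> x = y"
    using assms(2) unfolding poset_on_def by blast+
  have UW: "U \<subseteq> W" and up: "\<And>p q. p \<in> U \<Longrightarrow> q \<in> W \<Longrightarrow> le p q \<Longrightarrow> q \<in> U"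
    using U by (auto simp: upsets_def)
  show ?thesis
  proof
    assume "unique_min le U"
    then obtain m where m: "m \<in> U" "\<forall>y\<in>U. le y m \<longrightarrow> y = m"
      and unique: "\<And>m'. m' \<in> U \<Longrightarrow> \<forall>y\<in>U. le y m' \<longrightarrow> y = m' \<Longrightarrow> m' = m"
      unfolding unique_min_def by blast
    have "y \<in> {q\<in>W. le m q}" if y: "y \<in> U" for y
    proof -
      obtain z where "z \<in> U" "le z y" "\<forall>w\<in>U. le w z \<longrightarrow> w = z"
        using ex_minimal_below[OF finite_subset[OF UW assms(1)] poset_on_subset[OF assms(2) UW] y]
        by blast
      with unique[of z] y UW show ?thesis by blast
    qed
    then have "U = {q\<in>W. le m q}" using up m by blast
    then show "\<exists>u\<in>W. U = {q\<in>W. le u q}" using m UW by blast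
  next
    assume "\<exists>u\<in>W. U = {q\<in>W. le u q}"
    then obtain u where "u \<in> W" "U = {q\<in>W. le u q}" by blast
    then show "unique_min le U"
      unfolding unique_min_def using refl antisym by blast
  qed
qed

lemma card_unique_min_upsets:
  assumes "finite W" and "poset_on W le"
  shows "card {U\<in>upsets W le. unique_min le U} = card W"
proof -
  have refl: "\<And>x. x \<in> W \<Longrightarrow> le x x"
    and antisym: "\<And>x y. x \<in> W \<Longrightarrow> y \<in> W \<Longrightarrow> le x y \<Longrightarrow> le y x \<Longrightarrow> x = y"
    and trans: "\<And>x y z. x \<in> W \<Longrightarrow> y \<in> W \<Longrightarrow> z \<in> W \<Longrightarrow> le x y \<Longrightarrow> le y z \<Longrightarrow> le x z"
    using assms(2) unfolding poset_on_def by blast+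
  have principal: "{q\<in>W. le u q} \<in> upsets W le" if "u \<in> W" for u
    unfolding upsets_def using trans[OF that] by blast
  have "{U\<in>upsets W le. unique_min le U} = {U\<in>upsets W le. \<exists>u\<in>W. U = {q\<in>W. le u q}}"
    using unique_min_upset_iff_principal[OF assms] by blast
  also have "\<dots> = (\<lambda>u. {q\<in>W. le u q}) ` W"
    using principal by blast
  finally have "{U\<in>upsets W le. unique_min le U} = (\<lambda>u. {q\<in>W. le u q}) ` W" .
  moreover have "inj_on (\<lambda>u. {q\<in>W. le u q}) W"
  proof (rule inj_onI)
    fix u v assume u: "u \<in> W" and v: "v \<in> W" and eq: "{q\<in>W. le u q} = {q\<in>W. le v q}"
    have "le u v" using eq refl v by blast
    moreover have "le v u" using eq refl u by blast
    ultimately show "u = v" using antisym u v by blast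
  qed
  ultimately show ?thesis by (simp add: card_image)
qed

lemma sum_card_Ostar_single:
  assumes "finite W" and "U \<in> upsets W le" and "card W = m"
  shows "(\<Sum>c\<in>{1..m}. real (card (Ostar U le [c])) * of_bool (card (W - U) = m - c))
           = of_bool (unique_min le U)"
proof -
  have UW: "U \<subseteq> W" using assms(2) by (rule upsets_subset)
  then have fin: "finite U" using assms(1) by (rule finite_subset)
  have "(\<Sum>c\<in>{1..m}. real (card (Ostar U le [c])) * of_bool (card (W - U) = m - c))
      = (\<Sum>c\<in>{1..m}. of_bool (c = card U \<and> unique_min le U))"
  proof (intro sum.cong refl)
    fix c assume "c \<in> {1..m}"
    moreover have "card (W - U) = m - card U"
      using card_Diff_subset[OF fin UW] assms(3) by simp
    ultimately show "real (card (Ostar U le [c])) * of_bool (card (W - U) = m - c)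
        = of_bool (c = card U \<and> unique_min le U)"
      using card_ordered_surj_single[OF _ fin, of c le] card_mono[OF assms(1) UW] assms(3)
      by (auto simp: Ostar_eq_ordered_surj)
  qed
  also have "\<dots> = of_bool (unique_min le U)"
  proof -
    have "unique_min le U \<Longrightarrow> card U \<in> {1..m}"
      using card_mono[OF assms(1) UW] assms(3) fin by (auto simp: unique_min_def card_gt_0_iff Suc_le_eq)
    then show ?thesis by (auto simp: sum.delta')
  qed
  finally show ?thesis .
qed

lemma card_Ostar_snoc_div_piC:
  assumes "finite W" and "sum_list \<gamma> + c = m"
  shows "real (card (Ostar W le (\<gamma> @ [c]))) / real (piC (\<gamma> @ [c]))
       = (\<Sum>U\<in>upsets W le. real (card (Ostar U le [c])) / m
                            * (real (card (Ostar (W - U) le \<gamma>)) / real (piC \<gamma>)))"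
  using card_ordered_surj_append[OF assms(1)] assms(2)
  by (simp add: piC_snoc Ostar_eq_ordered_surj sum_divide_distrib mult.commute)

lemma sum_card_Ostar_div_piC:
  assumes "finite W" and "poset_on W le"
  shows "(\<Sum>\<gamma>\<in>compositions m. real (card (Ostar W le \<gamma>)) / real (piC \<gamma>)) = of_bool (card W = m)"
  using assms
proof (induction m arbitrary: W rule: less_induct)
  case (less m W)
  let ?S = "\<lambda>Q \<gamma>. real (card (Ostar Q le \<gamma>))"
  consider "card W \<noteq> m" | "card W = m" "m = 0" | "card W = m" "0 < m" by blast
  then show ?case
  proof cases
    case 1
    then have "Ostar W le \<gamma> = {}" if "\<gamma> \<in> compositions m" for \<gamma>
      using card_eq_sum_list_if_ordered_surj[OF less.prems(1)] that
      by (fastforce simp: compositions_def Ostar_eq_ordered_surj)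
    then show ?thesis using 1 by simp
  next
    case 2
    then show ?thesis
      using less.prems(1) by (simp add: compositions_0 card_ordered_surj_Nil piC_def Ostar_eq_ordered_surj)
  next
    case 3
    have IH: "(\<Sum>\<gamma>\<in>compositions (m - c). ?S (W - U) \<gamma> / real (piC \<gamma>)) = of_bool (card (W - U) = m - c)"
      if "c \<in> {1..m}" for c U
      using less.IH[of "m - c" "W - U"] that less.prems poset_on_subset[of W le "W - U"] by auto
    have "(\<Sum>\<gamma>\<in>compositions m. ?S W \<gamma> / real (piC \<gamma>))
        = (\<Sum>c\<in>{1..m}. \<Sum>\<gamma>\<in>compositions (m - c). ?S W (\<gamma> @ [c]) / real (piC (\<gamma> @ [c])))"
      by (rule sum_compositions_snoc[OF 3(2)])
    also have "\<dots> = (\<Sum>c\<in>{1..m}. \<Sum>\<gamma>\<in>compositions (m - c). \<Sum>U\<in>upsets W le.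
                       ?S U [c] / m * (?S (W - U) \<gamma> / real (piC \<gamma>)))"
      using card_Ostar_snoc_div_piC[OF less.prems(1)] by (simp add: compositions_def)
    also have "\<dots> = (\<Sum>c\<in>{1..m}. \<Sum>U\<in>upsets W le.
                       ?S U [c] / m * (\<Sum>\<gamma>\<in>compositions (m - c). ?S (W - U) \<gamma> / real (piC \<gamma>)))"
      by (simp add: sum_distrib_left sum.swap[where A="compositions _"])
    also have "\<dots> = (\<Sum>c\<in>{1..m}. \<Sum>U\<in>upsets W le.
                       ?S U [c] / m * of_bool (card (W - U) = m - c))"
      using IH by simp
    also have "\<dots> = (\<Sum>U\<in>upsets W le. (\<Sum>c\<in>{1..m}.
                       ?S U [c] * of_bool (card (W - U) = m - c)) / m)"
      by (subst sum.swap) (simp add: sum_divide_distrib del: sum_mult_of_bool_eq)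
    also have "\<dots> = (\<Sum>U\<in>upsets W le. of_bool (unique_min le U) / m)"
      using sum_card_Ostar_single[OF less.prems(1) _ 3(1)] by simp
    also have "\<dots> = real (card {U\<in>upsets W le. unique_min le U}) / m"
      using finite_upsets[OF less.prems(1), of le] by (simp add: sum_divide_distrib[symmetric] Int_def)
    also have "\<dots> = 1"
      using card_unique_min_upsets[OF less.prems] 3 by simp
    finally show ?thesis using 3 by simp
  qed
qed

section \<open>Refinement and the expansion of O in terms of O*\<close>

definition psum :: "nat list \<Rightarrow> nat \<Rightarrow> nat" where
  "psum xs i = sum_list (take i xs)"

lemma psum_append: "psum (xs @ ys) i = psum xs i + psum ys (i - length xs)"
  by (simp add: psum_def)

lemma psum_le_sum_list: "psum xs i \<le> sum_list xs"
proof -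
  have "sum_list xs = sum_list (take i xs) + sum_list (drop i xs)"
    by (metis append_take_drop_id sum_list_append)
  then show ?thesis by (simp add: psum_def)
qed

lemma psum_Suc: "i < length xs \<Longrightarrow> psum xs (Suc i) = psum xs i + xs ! i"
  by (simp add: psum_def take_Suc_conv_app_nth)

lemma psum_0[simp]: "psum xs 0 = 0" by (simp add: psum_def)

lemma psum_length: "length xs \<le> i \<Longrightarrow> psum xs i = sum_list xs" by (simp add: psum_def)

lemma psum_mono: "i \<le> j \<Longrightarrow> psum xs i \<le> psum xs j"
proof -
  assume "i \<le> j"
  then have "take j xs = take i xs @ take (j - i) (drop i xs)"
    by (metis le_add_diff_inverse take_add)
  then show ?thesis by (simp add: psum_def)
qed

lemma psum_strict_mono: "\<forall>a\<in>set xs. 0 < a \<Longrightarrow> i < j \<Longrightarrow> i < length xs \<Longrightarrow> psum xs i < psum xs j"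
proof -
  assume pos: "\<forall>a\<in>set xs. 0 < a" and ij: "i < j" and il: "i < length xs"
  have "psum xs i < psum xs (Suc i)" using psum_Suc[OF il] pos il by simp
  also have "\<dots> \<le> psum xs j" using ij psum_mono by simp
  finally show ?thesis .
qed

definition psums :: "nat list \<Rightarrow> nat set" where
  "psums xs = psum xs ` {0..length xs}"

lemma Sset_eq_psum_image: "Sset \<alpha> = psum \<alpha> ` {1..<length \<alpha>}"
  unfolding Sset_def psum_def by auto

lemma Sset_eq_psums:
  assumes "\<forall>a\<in>set \<alpha>. 0 < a"
  shows "Sset \<alpha> = psums \<alpha> - {0, sum_list \<alpha>}"
proof
  show "Sset \<alpha> \<subseteq> psums \<alpha> - {0, sum_list \<alpha>}"
  proof
    fix x assume "x \<in> Sset \<alpha>"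
    then obtain i where i: "1 \<le> i" "i < length \<alpha>" "x = psum \<alpha> i" by (auto simp: Sset_eq_psum_image)
    have "\<alpha> \<noteq> []" using i by auto
    then have "0 < x" using psum_strict_mono[OF assms, of 0 i] i by simp
    moreover have "x < sum_list \<alpha>" using psum_strict_mono[OF assms, of i "length \<alpha>"] i by (simp add: psum_length)
    ultimately show "x \<in> psums \<alpha> - {0, sum_list \<alpha>}" using i by (auto simp: psums_def)
  qed
next
  show "psums \<alpha> - {0, sum_list \<alpha>} \<subseteq> Sset \<alpha>"
  proof
    fix x assume "x \<in> psums \<alpha> - {0, sum_list \<alpha>}"
    then obtain i where i: "i \<le> length \<alpha>" "x = psum \<alpha> i" "x \<noteq> 0" "x \<noteq> sum_list \<alpha>" by (auto simp: psums_def)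
    then have "i \<noteq> 0" "i \<noteq> length \<alpha>" by (metis psum_0, metis psum_length order_refl)
    then show "x \<in> Sset \<alpha>" using i by (auto simp: Sset_eq_psum_image)
  qed
qed

lemma zero_in_psums: "0 \<in> psums xs" unfolding psums_def by (rule image_eqI[of _ _ 0]) auto
lemma sum_list_in_psums: "sum_list xs \<in> psums xs" unfolding psums_def by (rule image_eqI[of _ _ "length xs"]) (auto simp: psum_length)
lemma psums_le_sum_list: "x \<in> psums xs \<Longrightarrow> x \<le> sum_list xs" unfolding psums_def using psum_le_sum_list by auto

lemma refines_iff_psums_subset:
  assumes "\<forall>a\<in>set \<alpha>. 0 < a" "\<forall>a\<in>set \<beta>. 0 < a" "sum_list \<alpha> = sum_list \<beta>"
  shows "refines \<alpha> \<beta> \<longleftrightarrow> psums \<beta> \<subseteq> psums \<alpha>"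
  unfolding refines_def Sset_eq_psums[OF assms(1)] Sset_eq_psums[OF assms(2)] assms(3)
  using zero_in_psums[of \<alpha>] sum_list_in_psums[of \<alpha>] assms(3) by auto

lemma psums_append: "psums (xs @ ys) = psums xs \<union> (\<lambda>t. sum_list xs + t) ` psums ys"
proof
  show "psums (xs @ ys) \<subseteq> psums xs \<union> (\<lambda>t. sum_list xs + t) ` psums ys"
  proof
    fix x assume "x \<in> psums (xs @ ys)"
    then obtain i where i: "i \<le> length xs + length ys" "x = psum (xs @ ys) i" by (auto simp: psums_def)
    show "x \<in> psums xs \<union> (\<lambda>t. sum_list xs + t) ` psums ys"
    proof (cases "i \<le> length xs")
      case True
      then show ?thesis using i by (auto simp: psum_append psums_def)
    next
      case False
      then have "x = sum_list xs + psum ys (i - length xs)" using i by (simp add: psum_append psum_length)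
      moreover have "i - length xs \<in> {0..length ys}" using i by auto
      ultimately show ?thesis by (auto simp: psums_def)
    qed
  qed
next
  show "psums xs \<union> (\<lambda>t. sum_list xs + t) ` psums ys \<subseteq> psums (xs @ ys)"
  proof
    fix x assume "x \<in> psums xs \<union> (\<lambda>t. sum_list xs + t) ` psums ys"
    then show "x \<in> psums (xs @ ys)"
    proof
      assume "x \<in> psums xs"
      then obtain i where i: "i \<le> length xs" "x = psum xs i" by (auto simp: psums_def)
      then have "x = psum (xs @ ys) i" by (simp add: psum_append)
      then show ?thesis using i by (auto simp: psums_def)
    next
      assume "x \<in> (\<lambda>t. sum_list xs + t) ` psums ys"
      then obtain t where t: "t \<le> length ys" "x = sum_list xs + psum ys t" by (auto simp: psums_def)
      then have "x = psum (xs @ ys) (length xs + t)" by (simp add: psum_append psum_length)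
      then show ?thesis using t by (auto simp: psums_def)
    qed
  qed
qed

lemma refines_append_snoc_iff:
  assumes \<alpha>: "\<alpha> \<in> compositions m" and \<gamma>: "\<gamma> \<in> compositions b"
    and \<beta>: "\<beta> \<in> compositions m" and b: "0 < b"
  shows "refines (\<alpha> @ \<gamma>) (\<beta> @ [b]) \<longleftrightarrow> refines \<alpha> \<beta>"
proof -
  have pa: "\<forall>x\<in>set \<alpha>. 0 < x" "sum_list \<alpha> = m" using \<alpha> by (auto simp: compositions_def)
  have pg: "\<forall>x\<in>set \<gamma>. 0 < x" "sum_list \<gamma> = b" using \<gamma> by (auto simp: compositions_def)
  have pb: "\<forall>x\<in>set \<beta>. 0 < x" "sum_list \<beta> = m" using \<beta> by (auto simp: compositions_def)
  have "refines (\<alpha> @ \<gamma>) (\<beta> @ [b]) \<longleftrightarrow> psums (\<beta> @ [b]) \<subseteq> psums (\<alpha> @ \<gamma>)"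
    by (rule refines_iff_psums_subset) (use pa pg pb b in auto)
  also have "psums (\<beta> @ [b]) = psums \<beta> \<union> {m + b}"
    using psums_append[of \<beta> "[b]"] pb sum_list_in_psums[of \<beta>]
    by (auto simp: psums_def psum_def atLeast0_atMost_Suc)
  also have "psums (\<alpha> @ \<gamma>) = psums \<alpha> \<union> (\<lambda>t. m + t) ` psums \<gamma>"
    using psums_append[of \<alpha> \<gamma>] pa by simp
  also have "psums \<beta> \<union> {m + b} \<subseteq> psums \<alpha> \<union> (\<lambda>t. m + t) ` psums \<gamma> \<longleftrightarrow> psums \<beta> \<subseteq> psums \<alpha>"
  proof -
    have "m + b \<in> (\<lambda>t. m + t) ` psums \<gamma>" using sum_list_in_psums[of \<gamma>] pg by auto
    moreover have "x \<in> psums \<alpha>" if "x \<in> psums \<beta>" "x \<in> (\<lambda>t. m + t) ` psums \<gamma>" for x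
      using that psums_le_sum_list[of x \<beta>] pb sum_list_in_psums[of \<alpha>] pa by auto
    ultimately show ?thesis by blast
  qed
  also have "\<dots> \<longleftrightarrow> refines \<alpha> \<beta>"
    by (rule refines_iff_psums_subset[symmetric]) (use pa pb in auto)
  finally show ?thesis .
qed

lemma ex_split_if_refines_snoc:
  assumes \<alpha>: "\<alpha> \<in> compositions (m + b)" and "refines \<alpha> (\<beta> @ [b])"
    and \<beta>: "\<beta> \<in> compositions m" and "0 < b"
  shows "\<exists>k. take k \<alpha> \<in> compositions m \<and> drop k \<alpha> \<in> compositions b"
proof -
  have pa: "\<forall>x\<in>set \<alpha>. 0 < x" "sum_list \<alpha> = m + b" using \<alpha> by (auto simp: compositions_def)
  have pb: "\<forall>x\<in>set \<beta>. 0 < x" "sum_list \<beta> = m" using \<beta> by (auto simp: compositions_def)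
  have "psums (\<beta> @ [b]) \<subseteq> psums \<alpha>"
    using assms refines_iff_psums_subset[of \<alpha> "\<beta> @ [b]"] pa pb by auto
  moreover have "m \<in> psums (\<beta> @ [b])"
    using psums_append[of \<beta> "[b]"] sum_list_in_psums[of \<beta>] pb by auto
  ultimately obtain k where k: "psum \<alpha> k = m" by (auto simp: psums_def)
  have "sum_list \<alpha> = sum_list (take k \<alpha>) + sum_list (drop k \<alpha>)"
    by (metis append_take_drop_id sum_list_append)
  then have "sum_list (take k \<alpha>) = m" "sum_list (drop k \<alpha>) = b" using k pa by (auto simp: psum_def)
  moreover have "\<forall>x\<in>set (take k \<alpha>). 0 < x" "\<forall>x\<in>set (drop k \<alpha>). 0 < x"
    using pa by (auto dest: in_set_takeD in_set_dropD)
  ultimately show ?thesis by (auto simp: compositions_def)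
qed

lemma listcomp_eq_map_filter: "[f x. x \<leftarrow> xs, P x] = map f (filter P xs)"
  by (induction xs) auto

lemma subcomp_eq_map_filter: "subcomp \<alpha> \<beta> i = map ((!) \<alpha>) (filter (\<lambda>j. block \<alpha> j \<subseteq> block \<beta> i) [0..<length \<alpha>])"
  unfolding subcomp_def by (rule listcomp_eq_map_filter)

lemma block_eq_psum: "block \<alpha> j = {psum \<alpha> j + 1 .. psum \<alpha> (Suc j)}"
  by (simp add: block_def psum_def)

lemma upt_length_append: "[0..<length (\<alpha> @ \<gamma>)] = [0..<length \<alpha>] @ [length \<alpha>..<length \<alpha> + length \<gamma>]"
  using upt_add_eq_append[of 0 "length \<alpha>" "length \<gamma>"] by simp

lemma block_append_lt: "j < length \<alpha> \<Longrightarrow> block (\<alpha> @ \<gamma>) j = block \<alpha> j"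
  by (simp add: block_eq_psum psum_append)

lemma block_append_ge: "length \<alpha> \<le> j \<Longrightarrow>
   block (\<alpha> @ \<gamma>) j = {sum_list \<alpha> + psum \<gamma> (j - length \<alpha>) + 1 .. sum_list \<alpha> + psum \<gamma> (Suc j - length \<alpha>)}"
  by (simp add: block_eq_psum psum_append psum_length)

lemma map_nth_append_upt_right: "map ((!) (\<alpha> @ \<gamma>)) [length \<alpha>..<length \<alpha> + length \<gamma>] = \<gamma>"
  by (rule nth_equalityI) (auto simp: nth_append)

lemma map_nth_append_filter_left: "map ((!) (\<alpha> @ \<gamma>)) (filter P [0..<length \<alpha>]) = map ((!) \<alpha>) (filter P [0..<length \<alpha>])"
  by (rule map_cong) (auto simp: nth_append)

lemma subcomp_append_snoc:
  assumes pg: "\<forall>x\<in>set \<gamma>. 0 < x" and s: "sum_list \<alpha> = sum_list \<beta>" and i: "i < length \<beta>"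
  shows "subcomp (\<alpha> @ \<gamma>) (\<beta> @ [b]) i = subcomp \<alpha> \<beta> i"
proof -
  let ?la = "length \<alpha>"
  have block_i: "block (\<beta> @ [b]) i = block \<beta> i" using i by (rule block_append_lt)
  have bsub: "block \<beta> i \<subseteq> {..sum_list \<alpha>}" using psum_le_sum_list[of \<beta> "Suc i"] s by (auto simp: block_eq_psum)
  have f2: "filter (\<lambda>j. block (\<alpha> @ \<gamma>) j \<subseteq> block \<beta> i) [?la..<?la + length \<gamma>] = []"
  proof (rule filter_False, rule ballI)
    fix j assume j: "j \<in> set [?la..<?la + length \<gamma>]"
    then have j1: "?la \<le> j" "j - ?la < length \<gamma>" by auto
    have "\<gamma> \<noteq> []" using j1 by auto
    then have "0 < psum \<gamma> (Suc j - ?la)" using psum_strict_mono[OF pg, of 0 "Suc j - ?la"] j1 by simp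
    moreover have "psum \<gamma> (j - ?la) < psum \<gamma> (Suc j - ?la)" using psum_strict_mono[OF pg, of "j - ?la" "Suc j - ?la"] j1 by simp
    ultimately have "sum_list \<alpha> + psum \<gamma> (Suc j - ?la) \<in> block (\<alpha> @ \<gamma>) j"
      "sum_list \<alpha> < sum_list \<alpha> + psum \<gamma> (Suc j - ?la)"
      using block_append_ge[OF j1(1), of \<gamma>] by auto
    then show "\<not> block (\<alpha> @ \<gamma>) j \<subseteq> block \<beta> i" using bsub by fastforce
  qed
  have f1: "filter (\<lambda>j. block (\<alpha> @ \<gamma>) j \<subseteq> block \<beta> i) [0..<?la] = filter (\<lambda>j. block \<alpha> j \<subseteq> block \<beta> i) [0..<?la]"
    by (rule filter_cong) (auto simp: block_append_lt)
  show ?thesis unfolding subcomp_eq_map_filter block_i upt_length_append filter_append f2 f1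
    by (simp add: map_nth_append_filter_left)
qed

lemma subcomp_append_snoc_last:
  assumes pa: "\<forall>x\<in>set \<alpha>. 0 < x" and s: "sum_list \<alpha> = sum_list \<beta>" and sg: "sum_list \<gamma> = b"
  shows "subcomp (\<alpha> @ \<gamma>) (\<beta> @ [b]) (length \<beta>) = \<gamma>"
proof -
  let ?la = "length \<alpha>"
  let ?m = "sum_list \<alpha>"
  have last_block: "block (\<beta> @ [b]) (length \<beta>) = {?m + 1 .. ?m + b}"
    using s by (simp add: block_eq_psum psum_append psum_length psum_def)
  have f1: "filter (\<lambda>j. block (\<alpha> @ \<gamma>) j \<subseteq> {?m + 1 .. ?m + b}) [0..<?la] = []"
  proof (rule filter_False, rule ballI)
    fix j assume "j \<in> set [0..<?la]"
    then have j: "j < ?la" by simp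
    have "psum \<alpha> j < psum \<alpha> (Suc j)" using psum_strict_mono[OF pa, of j "Suc j"] j by simp
    moreover have "psum \<alpha> (Suc j) \<le> ?m" by (rule psum_le_sum_list)
    ultimately have "psum \<alpha> (Suc j) \<in> block (\<alpha> @ \<gamma>) j" "psum \<alpha> (Suc j) \<notin> {?m + 1 .. ?m + b}"
      using block_append_lt[OF j, of \<gamma>] by (auto simp: block_eq_psum)
    then show "\<not> block (\<alpha> @ \<gamma>) j \<subseteq> {?m + 1 .. ?m + b}" by blast
  qed
  have f2: "filter (\<lambda>j. block (\<alpha> @ \<gamma>) j \<subseteq> {?m + 1 .. ?m + b}) [?la..<?la + length \<gamma>] = [?la..<?la + length \<gamma>]"
  proof (rule filter_True, rule ballI)
    fix j assume j: "j \<in> set [?la..<?la + length \<gamma>]"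
    then have j1: "?la \<le> j" by auto
    have "psum \<gamma> (Suc j - ?la) \<le> b" using psum_le_sum_list sg by metis
    then show "block (\<alpha> @ \<gamma>) j \<subseteq> {?m + 1 .. ?m + b}"
      using block_append_ge[OF j1, of \<gamma>] by auto
  qed
  show ?thesis unfolding subcomp_eq_map_filter last_block upt_length_append filter_append f2 f1
    by (simp add: map_nth_append_upt_right)
qed

lemma piAB_append_snoc:
  assumes pa: "\<forall>x\<in>set \<alpha>. 0 < x" and pg: "\<forall>x\<in>set \<gamma>. 0 < x" and s: "sum_list \<alpha> = sum_list \<beta>" and sg: "sum_list \<gamma> = b"
  shows "piAB (\<alpha> @ \<gamma>) (\<beta> @ [b]) = piAB \<alpha> \<beta> * piC \<gamma>"
proof -
  have "(\<Prod>i<length \<beta>. piC (subcomp (\<alpha> @ \<gamma>) (\<beta> @ [b]) i)) = (\<Prod>i<length \<beta>. piC (subcomp \<alpha> \<beta> i))"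
    by (rule prod.cong) (auto simp: subcomp_append_snoc[OF pg s])
  then show ?thesis
    unfolding piAB_def using subcomp_append_snoc_last[OF pa s sg] by (simp add: lessThan_Suc mult.commute)
qed

lemma append_eq_append_sum_list_eq:
  assumes "xs @ ys = xs' @ ys'" and "sum_list xs = sum_list (xs' :: nat list)"
    and "\<forall>a\<in>set (xs @ ys). 0 < a" and "\<forall>a\<in>set (xs' @ ys'). 0 < a"
  shows "xs = xs'"
proof -
  obtain us where us: "xs = xs' @ us \<and> us @ ys = ys' \<or> xs @ us = xs' \<and> ys = us @ ys'"
    using assms(1) append_eq_append_conv2 by blast
  then have "sum_list us = 0" and "\<forall>a\<in>set us. 0 < a"
    using assms(2-4) by auto
  then have "us = []"
    by (cases us) auto
  then show ?thesis using us by simp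
qed

lemma inj_on_append_compositions: "inj_on (\<lambda>(x, y). x @ y) (compositions m \<times> compositions k)"
proof (rule inj_onI, clarify)
  fix \<alpha> \<gamma> \<alpha>' \<gamma>'
  assume "\<alpha> \<in> compositions m" "\<gamma> \<in> compositions k" "\<alpha>' \<in> compositions m" "\<gamma>' \<in> compositions k"
    and eq: "\<alpha> @ \<gamma> = \<alpha>' @ \<gamma>'"
  then have "\<alpha> = \<alpha>'"
    using append_eq_append_sum_list_eq[OF eq] by (auto simp: compositions_def)
  with eq show "\<alpha> = \<alpha>' \<and> \<gamma> = \<gamma>'" by simp
qed

lemma Nil_refines_Nil: "refines [] []" by (simp add: refines_def Sset_def)

lemma refines_snoc_eq_image_append:
  assumes \<beta>: "\<beta> \<in> compositions m" and b: "0 < b"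
  shows "{\<alpha>\<in>compositions (m + b). refines \<alpha> (\<beta> @ [b])}
           = (\<lambda>(x, y). x @ y) ` ({\<alpha>\<in>compositions m. refines \<alpha> \<beta>} \<times> compositions b)"
proof (intro equalityI subsetI)
  fix \<alpha> assume \<alpha>: "\<alpha> \<in> {\<alpha>\<in>compositions (m + b). refines \<alpha> (\<beta> @ [b])}"
  then obtain k where k: "take k \<alpha> \<in> compositions m" "drop k \<alpha> \<in> compositions b"
    using ex_split_if_refines_snoc[OF _ _ \<beta> b] by blast
  have "refines (take k \<alpha> @ drop k \<alpha>) (\<beta> @ [b])" using \<alpha> by simp
  then have "refines (take k \<alpha>) \<beta>" using refines_append_snoc_iff[OF k \<beta> b] by simp
  with k show "\<alpha> \<in> (\<lambda>(x, y). x @ y) ` ({\<alpha>\<in>compositions m. refines \<alpha> \<beta>} \<times> compositions b)"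
    by (auto intro!: image_eqI[of _ _ "(take k \<alpha>, drop k \<alpha>)"])
next
  fix \<alpha> assume "\<alpha> \<in> (\<lambda>(x, y). x @ y) ` ({\<alpha>\<in>compositions m. refines \<alpha> \<beta>} \<times> compositions b)"
  then obtain \<alpha>' \<gamma> where "\<alpha> = \<alpha>' @ \<gamma>" and \<alpha>': "\<alpha>' \<in> compositions m" "refines \<alpha>' \<beta>"
    and \<gamma>: "\<gamma> \<in> compositions b" by auto
  then show "\<alpha> \<in> {\<alpha>\<in>compositions (m + b). refines \<alpha> (\<beta> @ [b])}"
    using refines_append_snoc_iff[OF \<alpha>'(1) \<gamma> \<beta> b] by (auto simp: compositions_def)
qed

lemma sum_refines_snoc:
  assumes "\<beta> \<in> compositions m" and "0 < b"
  shows "(\<Sum>\<alpha>\<in>{\<alpha>\<in>compositions (m + b). refines \<alpha> (\<beta> @ [b])}. G \<alpha>)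
       = (\<Sum>\<alpha>\<in>{\<alpha>\<in>compositions m. refines \<alpha> \<beta>}. \<Sum>\<gamma>\<in>compositions b. G (\<alpha> @ \<gamma>))"
proof -
  have "inj_on (\<lambda>(x, y). x @ y) ({\<alpha>\<in>compositions m. refines \<alpha> \<beta>} \<times> compositions b)"
    by (rule inj_on_subset[OF inj_on_append_compositions]) auto
  then show ?thesis
    unfolding refines_snoc_eq_image_append[OF assms]
    by (simp add: sum.reindex sum.cartesian_product split_def)
qed

lemma card_Ostar_append_div_piAB:
  assumes "finite Q" and "\<alpha> \<in> compositions (sum_list \<beta>)" and "\<gamma> \<in> compositions b"
  shows "real (card (Ostar Q le (\<alpha> @ \<gamma>))) / real (piAB (\<alpha> @ \<gamma>) (\<beta> @ [b]))
       = (\<Sum>W\<in>upsets Q le. real (card (Ostar (Q - W) le \<alpha>)) / real (piAB \<alpha> \<beta>)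
                            * (real (card (Ostar W le \<gamma>)) / real (piC \<gamma>)))"
proof -
  have "piAB (\<alpha> @ \<gamma>) (\<beta> @ [b]) = piAB \<alpha> \<beta> * piC \<gamma>"
    using assms(2,3) by (intro piAB_append_snoc) (auto simp: compositions_def)
  then show ?thesis
    using card_ordered_surj_append[OF assms(1)]
    by (simp add: Ostar_eq_ordered_surj sum_divide_distrib)
qed

lemma card_Oset_eq_sum_Ostar:
  assumes "finite Q" and "poset_on Q le" and "\<forall>b\<in>set \<beta>. 0 < b"
  shows "real (card (Oset Q le \<beta>)) =
    (\<Sum>\<alpha>\<in>{\<alpha>\<in>compositions (sum_list \<beta>). refines \<alpha> \<beta>}. real (card (Ostar Q le \<alpha>)) / real (piAB \<alpha> \<beta>))"
  using assms
proof (induction \<beta> arbitrary: Q rule: rev_induct)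
  case Nil
  have "{\<alpha>\<in>compositions (sum_list []). refines \<alpha> []} = {[]}"
    by (auto simp: compositions_0 Nil_refines_Nil)
  then show ?case
    by (simp add: card_ordered_surj_Nil piAB_def piC_def Ostar_eq_ordered_surj)
next
  case (snoc b \<beta> Q)
  let ?A = "{\<alpha>\<in>compositions (sum_list \<beta>). refines \<alpha> \<beta>}"
  let ?S = "\<lambda>Q \<alpha>. real (card (Ostar Q le \<alpha>))"
  have b: "0 < b" and \<beta>: "\<beta> \<in> compositions (sum_list \<beta>)"
    using snoc.prems(3) by (auto simp: compositions_def)
  have "(\<Sum>\<alpha>\<in>{\<alpha>\<in>compositions (sum_list (\<beta> @ [b])). refines \<alpha> (\<beta> @ [b])}. ?S Q \<alpha> / real (piAB \<alpha> (\<beta> @ [b])))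
      = (\<Sum>\<alpha>\<in>?A. \<Sum>\<gamma>\<in>compositions b. ?S Q (\<alpha> @ \<gamma>) / real (piAB (\<alpha> @ \<gamma>) (\<beta> @ [b])))"
    using sum_refines_snoc[OF \<beta> b] by simp
  also have "\<dots> = (\<Sum>W\<in>upsets Q le. (\<Sum>\<alpha>\<in>?A. ?S (Q - W) \<alpha> / real (piAB \<alpha> \<beta>))
                                    * (\<Sum>\<gamma>\<in>compositions b. ?S W \<gamma> / real (piC \<gamma>)))"
    unfolding sum_product
    using card_Ostar_append_div_piAB[OF snoc.prems(1)]
    by (simp add: sum.swap[where B="upsets Q le"])
  also have "\<dots> = (\<Sum>W\<in>upsets Q le. real (card (Oset (Q - W) le \<beta>)) * real (card (Oset W le [b])))"
  proof (intro sum.cong refl)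
    fix W assume "W \<in> upsets Q le"
    then have W: "W \<subseteq> Q" "finite W" using snoc.prems(1) upsets_subset finite_subset by metis+
    have "(\<Sum>\<alpha>\<in>?A. ?S (Q - W) \<alpha> / real (piAB \<alpha> \<beta>)) = real (card (Oset (Q - W) le \<beta>))"
      using snoc.IH[of "Q - W"] snoc.prems poset_on_subset[OF snoc.prems(2)] by auto
    moreover have "(\<Sum>\<gamma>\<in>compositions b. ?S W \<gamma> / real (piC \<gamma>)) = real (card (Oset W le [b]))"
      using sum_card_Ostar_div_piC[OF W(2) poset_on_subset[OF snoc.prems(2) W(1)], of b]
        card_ordered_surj_single[OF b W(2)] by simp
    ultimately show "(\<Sum>\<alpha>\<in>?A. ?S (Q - W) \<alpha> / real (piAB \<alpha> \<beta>)) * (\<Sum>\<gamma>\<in>compositions b. ?S W \<gamma> / real (piC \<gamma>))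
        = real (card (Oset (Q - W) le \<beta>)) * real (card (Oset W le [b]))" by simp
  qed
  also have "\<dots> = real (card (Oset Q le (\<beta> @ [b])))"
    using card_ordered_surj_append[OF snoc.prems(1)] by simp
  finally show ?case by simp
qed

section \<open>P-partitions\<close>

definition ppartitions :: "'a set \<Rightarrow> ('a \<Rightarrow> 'a \<Rightarrow> bool) \<Rightarrow> nat \<Rightarrow> ('a \<Rightarrow> nat) set" where
  "ppartitions P le N = {f\<in>P \<rightarrow>\<^sub>E {1..N}. \<forall>p\<in>P. \<forall>q\<in>P. le p q \<and> p \<noteq> q \<longrightarrow> f p \<le> f q}"

definition strict_seqs :: "nat \<Rightarrow> nat \<Rightarrow> (nat \<Rightarrow> nat) set" where
  "strict_seqs N l = {i\<in>{0..<l} \<rightarrow>\<^sub>E {1..N}. strict_mono_on {0..<l} i}"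

lemma finite_strict_seqs: "finite (strict_seqs N l)"
  unfolding strict_seqs_def by (rule finite_subset[of _ "{0..<l} \<rightarrow>\<^sub>E {1..N}"]) (auto intro: finite_PiE)

lemma Mqs_eq_sum_strict_seqs: "Mqs \<beta> N x = (\<Sum>i\<in>strict_seqs N (length \<beta>). \<Prod>j<length \<beta>. x (i j) ^ (\<beta> ! j))"
  by (simp add: Mqs_def strict_seqs_def)

definition compose_ppartition :: "'a set \<Rightarrow> nat list \<times> ('a \<Rightarrow> nat) \<times> (nat \<Rightarrow> nat) \<Rightarrow> 'a \<Rightarrow> nat" where
  "compose_ppartition P = (\<lambda>(\<beta>, g, i). restrict (\<lambda>p. i (g p - 1)) P)"

definition sorted_values :: "'a set \<Rightarrow> ('a \<Rightarrow> nat) \<Rightarrow> nat list" where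
  "sorted_values P f = sorted_list_of_set (f ` P)"

definition value_index :: "'a set \<Rightarrow> ('a \<Rightarrow> nat) \<Rightarrow> nat \<Rightarrow> nat" where
  "value_index P f = the_inv_into {0..<length (sorted_values P f)} ((!) (sorted_values P f))"

(* f = i \<circ> (g - 1) where i enumerates the values of f increasingly and g p is the rank of f p. *)
definition factor_ppartition :: "'a set \<Rightarrow> ('a \<Rightarrow> nat) \<Rightarrow> nat list \<times> ('a \<Rightarrow> nat) \<times> (nat \<Rightarrow> nat)" where
  "factor_ppartition P f =
     (map (\<lambda>v. card {p\<in>P. f p = v}) (sorted_values P f),
      restrict (\<lambda>p. Suc (value_index P f (f p))) P,
      restrict ((!) (sorted_values P f)) {0..<length (sorted_values P f)})"

lemma sorted_values:
  assumes "finite P"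
  shows "set (sorted_values P f) = f ` P" and "distinct (sorted_values P f)"
    and "sorted_wrt (<) (sorted_values P f)"
  using assms by (auto simp: sorted_values_def strict_sorted_list_of_set)

lemma inj_on_nth_sorted_values:
  "finite P \<Longrightarrow> inj_on ((!) (sorted_values P f)) {0..<length (sorted_values P f)}"
  by (rule inj_on_nth) (auto simp: sorted_values(2))

lemma image_nth_sorted_values:
  "finite P \<Longrightarrow> (!) (sorted_values P f) ` {0..<length (sorted_values P f)} = f ` P"
  unfolding sorted_values(1)[of P f, symmetric] by (auto simp: in_set_conv_nth)

lemma value_index:
  assumes "finite P" and "a \<in> f ` P"
  shows "value_index P f a < length (sorted_values P f)" and "sorted_values P f ! value_index P f a = a"
proof -
  have "a \<in> (!) (sorted_values P f) ` {0..<length (sorted_values P f)}"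
    using assms image_nth_sorted_values by blast
  then show "value_index P f a < length (sorted_values P f)" and "sorted_values P f ! value_index P f a = a"
    using the_inv_into_into[OF inj_on_nth_sorted_values[OF assms(1)] _ subset_refl]
      f_the_inv_into_f[OF inj_on_nth_sorted_values[OF assms(1)]]
    by (auto simp: value_index_def)
qed

lemma value_index_nth:
  "finite P \<Longrightarrow> k < length (sorted_values P f) \<Longrightarrow> value_index P f (sorted_values P f ! k) = k"
  unfolding value_index_def by (rule the_inv_into_f_f[OF inj_on_nth_sorted_values]) auto

lemma sorted_values_le_iff:
  assumes "finite P" and "k < length (sorted_values P f)" and "k' < length (sorted_values P f)"
  shows "sorted_values P f ! k \<le> sorted_values P f ! k' \<longleftrightarrow> k \<le> k'"
proof -
  have "sorted_values P f ! i < sorted_values P f ! j" if "i < j" "j < length (sorted_values P f)" for i j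
    using sorted_wrt_nth_less[OF sorted_values(3)[OF assms(1)]] that .
  then show ?thesis
    using assms(2,3) by (cases k k' rule: linorder_cases) (auto simp: less_imp_le dest: leD)
qed

lemma compose_ppartition_apply: "p \<in> P \<Longrightarrow> compose_ppartition P (\<beta>, g, i) p = i (g p - 1)"
  by (simp add: compose_ppartition_def)

lemma image_ordered_surj_pred:
  assumes "g \<in> ordered_surj P le R \<beta>"
  shows "(\<lambda>p. g p - 1) ` P = {0..<length \<beta>}"
proof -
  have "(\<lambda>p. g p - 1) ` P = (\<lambda>k. k - 1) ` {1..length \<beta>}"
    unfolding ordered_surjD(3)[OF assms, symmetric] by (simp add: image_image)
  also have "\<dots> = {0..<length \<beta>}"
    by (force simp: image_iff)
  finally show ?thesis .
qed

lemma sorted_values_compose_ppartition: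
  assumes "g \<in> ordered_surj P le R \<beta>" and "i \<in> strict_seqs N (length \<beta>)"
  shows "sorted_values P (compose_ppartition P (\<beta>, g, i)) = map i [0..<length \<beta>]"
proof -
  let ?l = "length \<beta>"
  have sm: "strict_mono_on {0..<?l} i" using assms(2) by (simp add: strict_seqs_def)
  have "compose_ppartition P (\<beta>, g, i) ` P = i ` (\<lambda>p. g p - 1) ` P"
    by (auto simp: compose_ppartition_def)
  also have "\<dots> = i ` {0..<?l}"
    using image_ordered_surj_pred[OF assms(1)] by simp
  finally have "compose_ppartition P (\<beta>, g, i) ` P = set (map i [0..<?l])" by simp
  moreover have "sorted_wrt (<) (map i [0..<?l])"
    using sm unfolding sorted_wrt_iff_nth_less by (auto simp: strict_mono_on_def)
  ultimately show ?thesis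
    unfolding sorted_values_def by (metis sorted_list_of_set.idem_if_sorted_distinct
      strict_sorted_iff)
qed

lemma factor_compose_ppartition:
  assumes "finite P" and g: "g \<in> ordered_surj P le R \<beta>" and i: "i \<in> strict_seqs N (length \<beta>)"
  shows "factor_ppartition P (compose_ppartition P (\<beta>, g, i)) = (\<beta>, g, i)"
proof -
  let ?f = "compose_ppartition P (\<beta>, g, i)" and ?l = "length \<beta>"
  note gD = ordered_surjD[OF g]
  have sv: "sorted_values P ?f = map i [0..<?l]"
    by (rule sorted_values_compose_ppartition[OF g i])
  have inj: "inj_on i {0..<?l}"
    using i strict_mono_on_imp_inj_on by (auto simp: strict_seqs_def)
  have fibre: "{p\<in>P. ?f p = i k} = {p\<in>P. g p = Suc k}" if "k < ?l" for k
  proof -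
    have "g p - 1 = k \<longleftrightarrow> g p = Suc k" if "p \<in> P" for p
      using gD(1)[OF that] by auto
    moreover have "i (g p - 1) = i k \<longleftrightarrow> g p - 1 = k" if "p \<in> P" for p
      using inj_onD[OF inj] gD(1)[OF that] \<open>k < ?l\<close> by force
    ultimately show ?thesis by (auto simp: compose_ppartition_apply)
  qed
  have "map (\<lambda>v. card {p\<in>P. ?f p = v}) (sorted_values P ?f) = \<beta>"
    unfolding sv by (rule nth_equalityI) (auto simp: fibre gD(5))
  moreover have "restrict (\<lambda>p. Suc (value_index P ?f (?f p))) P = g"
  proof (rule extensionalityI[OF _ gD(2)])
    fix p assume p: "p \<in> P"
    then have "value_index P ?f (?f p) = g p - 1"
      using value_index_nth[OF assms(1), of "g p - 1" ?f] gD(1)[OF p] sv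
      by (auto simp: compose_ppartition_apply)
    then show "restrict (\<lambda>p. Suc (value_index P ?f (?f p))) P p = g p"
      using gD(1)[OF p] p by simp
  qed simp
  moreover have "restrict ((!) (sorted_values P ?f)) {0..<length (sorted_values P ?f)} = i"
    using i by (auto simp: sv strict_seqs_def PiE_iff extensional_def fun_eq_iff)
  ultimately show ?thesis
    by (simp add: factor_ppartition_def)
qed

lemma compose_in_ppartitions:
  assumes g: "g \<in> ordered_surj P le R \<beta>" and i: "i \<in> strict_seqs N (length \<beta>)"
  shows "compose_ppartition P (\<beta>, g, i) \<in> ppartitions P le N"
proof -
  note gD = ordered_surjD[OF g]
  have pred: "g p - 1 \<in> {0..<length \<beta>}" if "p \<in> P" for p
    using gD(1)[OF that] by auto
  have "i (g p - 1) \<le> i (g q - 1)" if "p \<in> P" "q \<in> P" "le p q" for p q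
  proof -
    have "g p - 1 \<le> g q - 1" using gD(4)[OF that] by (rule diff_le_mono)
    then show ?thesis
      using i pred that by (auto simp: strict_seqs_def strict_mono_on_def order_le_less)
  qed
  moreover have "i (g p - 1) \<in> {1..N}" if "p \<in> P" for p
    using i pred[OF that] by (auto simp: strict_seqs_def PiE_iff)
  ultimately show ?thesis
    by (auto simp: ppartitions_def compose_ppartition_def)
qed

lemma compose_factor_ppartition:
  assumes "finite P" and "f \<in> ppartitions P le N"
  shows "compose_ppartition P (factor_ppartition P f) = f"
proof (rule extensionalityI)
  show "f \<in> extensional P" using assms(2) by (simp add: ppartitions_def PiE_iff)
  fix p assume "p \<in> P"
  then show "compose_ppartition P (factor_ppartition P f) p = f p"
    using value_index[OF assms(1)] by (simp add: compose_ppartition_def factor_ppartition_def)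
qed (simp add: compose_ppartition_def factor_ppartition_def)

lemma fibre_sizes_in_compositions:
  assumes "finite P"
  shows "map (\<lambda>v. card {p\<in>P. f p = v}) (sorted_values P f) \<in> compositions (card P)"
proof -
  let ?L = "sorted_values P f"
  have "sum_list (map (\<lambda>v. card {p\<in>P. f p = v}) ?L) = (\<Sum>v\<in>f ` P. card {p\<in>P. f p = v})"
    using sorted_values[OF assms] by (simp add: sum_list_distinct_conv_sum_set)
  also have "\<dots> = card P"
    using sum.group[of P "f ` P" f "\<lambda>_. 1::nat"] assms by simp
  finally show ?thesis
    using sorted_values(1)[OF assms] assms by (auto simp: compositions_def card_gt_0_iff)
qed

lemma value_rank_in_Oset:
  assumes "finite P" and f: "f \<in> ppartitions P le N"
  shows "restrict (\<lambda>p. Suc (value_index P f (f p))) P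
           \<in> Oset P le (map (\<lambda>v. card {p\<in>P. f p = v}) (sorted_values P f))"
proof -
  let ?L = "sorted_values P f" and ?g = "restrict (\<lambda>p. Suc (value_index P f (f p))) P"
  note idx = value_index[OF assms(1)] and nth_idx = value_index_nth[OF assms(1)]
  have fibre: "{p\<in>P. ?g p = k} = {p\<in>P. f p = ?L ! (k - 1)}" if "k \<in> {1..length ?L}" for k
  proof -
    have "k - 1 < length ?L" and "Suc (k - 1) = k" using that by auto
    then show ?thesis using idx nth_idx[of "k - 1" f] by force
  qed
  have "?g ` P = {1..length ?L}"
  proof (intro equalityI subsetI)
    fix k assume "k \<in> {1..length ?L}"
    moreover then have "?L ! (k - 1) \<in> f ` P"
      using sorted_values(1)[OF assms(1)] nth_mem[of "k - 1" ?L] by auto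
    ultimately show "k \<in> ?g ` P" using fibre by force
  qed (use idx(1)[OF imageI] in \<open>auto simp: Suc_le_eq\<close>)
  moreover have "?g p \<le> ?g q" if "p \<in> P" "q \<in> P" "le p q" for p q
  proof (cases "p = q")
    case False
    then have "?L ! value_index P f (f p) \<le> ?L ! value_index P f (f q)"
      using f that idx(2) by (auto simp: ppartitions_def)
    then show ?thesis
      using sorted_values_le_iff[OF assms(1)] idx(1) that by simp
  qed simp
  moreover have "card {p\<in>P. ?g p = k} = map (\<lambda>v. card {p\<in>P. f p = v}) ?L ! (k - 1)"
    if "k \<in> {1..length ?L}" for k
  proof -
    have "k - 1 < length ?L" using that by auto
    then show ?thesis using fibre[OF that] by simp
  qed
  ultimately show ?thesis
    by (auto simp: ordered_surj_def)
qed

lemma nth_sorted_values_in_strict_seqs: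
  assumes "finite P" and "f \<in> ppartitions P le N"
  shows "restrict ((!) (sorted_values P f)) {0..<length (sorted_values P f)}
           \<in> strict_seqs N (length (sorted_values P f))"
proof -
  have "sorted_values P f ! k \<in> {1..N}" if "k < length (sorted_values P f)" for k
    using assms(2) image_nth_sorted_values[OF assms(1), of f] that by (force simp: ppartitions_def)
  moreover have "strict_mono_on {0..<length (sorted_values P f)} ((!) (sorted_values P f))"
    using sorted_wrt_nth_less[OF sorted_values(3)[OF assms(1)]] by (auto simp: strict_mono_on_def)
  ultimately show ?thesis
    by (auto simp: strict_seqs_def strict_mono_on_def)
qed

lemma factor_ppartition_in:
  assumes "finite P" and "f \<in> ppartitions P le N"
  shows "factor_ppartition P f
           \<in> (SIGMA \<beta>:compositions (card P). Oset P le \<beta> \<times> strict_seqs N (length \<beta>))"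
  using fibre_sizes_in_compositions[OF assms(1)] value_rank_in_Oset[OF assms]
    nth_sorted_values_in_strict_seqs[OF assms]
  by (simp add: factor_ppartition_def)

lemma prod_compose_ppartition:
  fixes x :: "nat \<Rightarrow> real"
  assumes "finite P" and g: "g \<in> ordered_surj P le R \<beta>"
  shows "(\<Prod>p\<in>P. x (compose_ppartition P (\<beta>, g, i) p)) = (\<Prod>j<length \<beta>. x (i j) ^ (\<beta> ! j))"
proof -
  note gD = ordered_surjD[OF g]
  have "(\<Prod>p\<in>P. x (compose_ppartition P (\<beta>, g, i) p)) = (\<Prod>p\<in>P. x (i (g p - 1)))"
    by (simp add: compose_ppartition_apply)
  also have "\<dots> = (\<Prod>k\<in>{1..length \<beta>}. \<Prod>p\<in>{p\<in>P. g p = k}. x (i (g p - 1)))"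
    by (rule prod.group[symmetric]) (use assms(1) gD(3) in auto)
  also have "\<dots> = (\<Prod>k\<in>{1..length \<beta>}. \<Prod>p\<in>{p\<in>P. g p = k}. x (i (k - 1)))"
    by (intro prod.cong) auto
  also have "\<dots> = (\<Prod>k\<in>{1..length \<beta>}. x (i (k - 1)) ^ (\<beta> ! (k - 1)))"
    using gD(5) by simp
  also have "\<dots> = (\<Prod>j<length \<beta>. x (i j) ^ (\<beta> ! j))"
    by (rule prod.reindex_bij_witness[where i=Suc and j="\<lambda>k. k - 1"]) auto
  finally show ?thesis .
qed

lemma KP_eq_sum_Oset:
  assumes "finite P"
  shows "KP P le N x = (\<Sum>\<beta>\<in>compositions (card P). real (card (Oset P le \<beta>)) * Mqs \<beta> N x)"
proof -
  let ?T = "SIGMA \<beta>:compositions (card P). Oset P le \<beta> \<times> strict_seqs N (length \<beta>)"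
  have "KP P le N x = (\<Sum>f\<in>ppartitions P le N. \<Prod>p\<in>P. x (f p))"
    by (simp add: KP_def ppartitions_def)
  also have "\<dots> = (\<Sum>(\<beta>, gi)\<in>?T. \<Prod>p\<in>P. x (compose_ppartition P (\<beta>, gi) p))"
    by (rule sum.reindex_bij_witness[where j="compose_ppartition P" and i="factor_ppartition P", symmetric])
      (use assms factor_compose_ppartition compose_in_ppartitions
         compose_factor_ppartition factor_ppartition_in in auto)
  also have "\<dots> = (\<Sum>\<beta>\<in>compositions (card P). \<Sum>gi\<in>Oset P le \<beta> \<times> strict_seqs N (length \<beta>).
                     \<Prod>p\<in>P. x (compose_ppartition P (\<beta>, gi) p))"
    by (rule sum.Sigma[symmetric])
      (simp_all add: finite_compositions finite_strict_seqs finite_ordered_surj assms)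
  also have "\<dots> = (\<Sum>\<beta>\<in>compositions (card P). \<Sum>g\<in>Oset P le \<beta>. \<Sum>i\<in>strict_seqs N (length \<beta>).
                     \<Prod>p\<in>P. x (compose_ppartition P (\<beta>, g, i) p))"
    by (simp add: sum.cartesian_product)
  also have "\<dots> = (\<Sum>\<beta>\<in>compositions (card P). \<Sum>g\<in>Oset P le \<beta>. Mqs \<beta> N x)"
    using prod_compose_ppartition[OF assms] by (simp add: Mqs_eq_sum_strict_seqs)
  finally show ?thesis by simp
qed

lemma zee_pos: "\<forall>a\<in>set \<alpha>. 0 < a \<Longrightarrow> 0 < zee \<alpha>"
  unfolding zee_def by (rule prod_pos) auto

lemma sum_Psi_div_zee_eq_sum_Mqs:
  "(\<Sum>\<alpha>\<in>compositions n. Psi \<alpha> N x / real (zee \<alpha>) * c \<alpha>)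
     = (\<Sum>\<beta>\<in>compositions n. (\<Sum>\<alpha>\<in>{\<alpha>\<in>compositions n. refines \<alpha> \<beta>}. c \<alpha> / real (piAB \<alpha> \<beta>)) * Mqs \<beta> N x)"
proof -
  have "(\<Sum>\<alpha>\<in>compositions n. Psi \<alpha> N x / real (zee \<alpha>) * c \<alpha>)
      = (\<Sum>\<alpha>\<in>compositions n. \<Sum>\<beta>\<in>{\<beta>\<in>compositions n. refines \<alpha> \<beta>}. c \<alpha> / real (piAB \<alpha> \<beta>) * Mqs \<beta> N x)"
  proof (intro sum.cong refl)
    fix \<alpha> assume "\<alpha> \<in> compositions n"
    then have psi: "Psi \<alpha> N x / real (zee \<alpha>)
        = (\<Sum>\<beta>\<in>{\<beta>\<in>compositions n. refines \<alpha> \<beta>}. Mqs \<beta> N x / real (piAB \<alpha> \<beta>))"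
      using zee_pos[of \<alpha>] by (simp add: Psi_def compositions_def)
    show "Psi \<alpha> N x / real (zee \<alpha>) * c \<alpha>
        = (\<Sum>\<beta>\<in>{\<beta>\<in>compositions n. refines \<alpha> \<beta>}. c \<alpha> / real (piAB \<alpha> \<beta>) * Mqs \<beta> N x)"
      unfolding psi sum_distrib_right by (simp add: ac_simps)
  qed
  also have "\<dots> = (\<Sum>\<beta>\<in>compositions n. (\<Sum>\<alpha>\<in>{\<alpha>\<in>compositions n. refines \<alpha> \<beta>}. c \<alpha> / real (piAB \<alpha> \<beta>)) * Mqs \<beta> N x)"
    by (subst sum.swap_restrict) (simp_all add: finite_compositions sum_distrib_right)
  finally show ?thesis .
qed

theorem theorem5p4:
  fixes P :: "'a set" and le :: "'a \<Rightarrow> 'a \<Rightarrow> bool" and n :: nat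
  assumes "finite P" and "poset_on P le" and "card P = n"
  shows "\<forall>N (x :: nat \<Rightarrow> real).
           KP P le N x = (\<Sum>\<alpha>\<in>compositions n. Psi \<alpha> N x / real (zee \<alpha>) * real (card (Ostar P le \<alpha>)))"
proof (intro allI)
  fix N and x :: "nat \<Rightarrow> real"
  have "(\<Sum>\<alpha>\<in>compositions n. Psi \<alpha> N x / real (zee \<alpha>) * real (card (Ostar P le \<alpha>)))
      = (\<Sum>\<beta>\<in>compositions n. real (card (Oset P le \<beta>)) * Mqs \<beta> N x)"
    unfolding sum_Psi_div_zee_eq_sum_Mqs
    using card_Oset_eq_sum_Ostar[OF assms(1,2)] by (simp add: compositions_def)
  also have "\<dots> = KP P le N x"
    using KP_eq_sum_Oset[OF assms(1)] assms(3) by simp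
  finally show "KP P le N x = (\<Sum>\<alpha>\<in>compositions n. Psi \<alpha> N x / real (zee \<alpha>) * real (card (Ostar P le \<alpha>)))"
    by simp
qed

end
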